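(* Let $S$ be a closed session type with $S\neq\mathsf{end}$. Then there is no monitor $M$ that is both sound and complete for $S$; that is, there is no monitor $M$ such that (soundness) for every process $P$, if $\langle P;M\rangle\xRightarrow{t}\langle P';\mathsf{no}_P\rangle$ for some trace $t$ and process $P'$ then $\emptyset\cdot\emptyset\vdash P:S$ is not derivable, and (completeness) for every process $P$, if $\emptyset\cdot\emptyset\vdash P:S$ is not derivable then there exist a trace $t$ and process $P'$ with $\langle P;M\rangle\xRightarrow{t}\langle P';\mathsf{no}_P\rangle$.
   Context: Values $v$ (including tuples), value variables $x$, process variables $X$; $a$ ranges over values and value variables. Boolean predicates $A$ include $\mathsf{tt},\mathsf{ff}$, comparisons, conjunction, negation; $A\Downarrow\mathsf{tt}$ / $A\Downarrow\mathsf{ff}$ denote evaluation; predicates are type-checked by standard rules. Processes: $P,Q ::= \triangleleft \mathtt{l}(a).P \mid \triangleright\{\mathtt{l}_i(x_i).P_i\}_{i\in I} \mid \mu_X.P \mid X \mid \mathsf{if}\ A\ \mathsf{then}\ P\ \mathsf{else}\ Q \mid \mathbf{0}$, guarded recursion. Transitions: $\mu_X.P \xrightarrow{\tau} P[\mu_X.P/X]$; $\triangleleft\mathtt{l}(v).P \xrightarrow{\triangleleft \mathtt{l}(v)} P$; $\triangleright\{\mathtt{l}_i(x_i).P_i\}_{i\in I} \xrightarrow{\triangleright \mathtt{l}_j(v)} P_j[v/x_j]$ for $j\in I$; $\mathsf{if}\ A\ \mathsf{then}\ P\ \mathsf{else}\ Q \xrightarrow{\tau} P$ if $A\Downarrow\mathsf{tt}$,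 $\xrightarrow{\tau} Q$ if $A\Downarrow\mathsf{ff}$. Base types $\mathsf{B} ::= \mathsf{Int}\mid\mathsf{Str}\mid\mathsf{Bool}\mid\dots\mid(\mathsf{B},\mathsf{B})$. Session types $S ::= \oplus\{!\mathtt{l}_i(\mathsf{B}_i).S_i\}_{i\in I} \mid \&\{?\mathtt{l}_i(\mathsf{B}_i).S_i\}_{i\in I} \mid \mathsf{rec}\ X.S \mid X \mid \mathsf{end}$, $I\neq\emptyset$, labels pairwise distinct, guarded recursion; types are equi-recursive ($\mathsf{rec}\ X.S$ identified with its unfolding), so "$S\neq\mathsf{end}$" is understood up to this identification. Typing with $\Theta$ (process variables to session types) and $\Gamma$ (value variables to base types): $\Gamma\vdash x:\mathsf{B}$ if $\Gamma(x)=\mathsf{B}$; $\Gamma\vdash v:\mathsf{B}$ if $v\in\mathsf{B}$. (tBra) if for all $i\in I$, $\Theta\cdot\Gamma,x_i:\mathsf{B}_i\vdash P_i:S_i$, then $\Theta\cdot\Gamma\vdash \triangleright\{\mathtt{l}_i(x_i).P_i\}_{i\in I\cup J} : \&\{?\mathtt{l}_i(\mathsf{B}_i).S_i\}_{i\in I}$; (tSel) if some $i\in I$ has $\mathtt{l}=\mathtt{l}_i$, $\Gamma\vdash a:\mathsf{B}_i$, $\Theta\cdot\Gamma\vdash P:S_i$, then $\Theta\cdot\Gamma\vdash \triangleleft\mathtt{l}(a).P : \oplus\{!\mathtt{l}_i(\mathsf{B}_i).S_i\}_{i\in I}$; (tRec) $\Theta,X:S\cdot\Gamma\vdash P:S$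 implies $\Theta\cdot\Gamma\vdash\mu_X.P:S$; (tPVar) $\Theta(X)=S$ implies $\Theta\cdot\Gamma\vdash X:S$; (tIf) $\Gamma\vdash A:\mathsf{Bool}$, $\Theta\cdot\Gamma\vdash P:S$, $\Theta\cdot\Gamma\vdash Q:S$ imply $\Theta\cdot\Gamma\vdash \mathsf{if}\ A\ \mathsf{then}\ P\ \mathsf{else}\ Q:S$; (tNil) $\Theta\cdot\Gamma\vdash\mathbf{0}:\mathsf{end}$. Monitors: $M,N ::= \triangleleft\mathtt{l}(a).M \mid \triangleright\{\mathtt{l}_i(x_i).M_i\}_{i\in I} \mid \blacktriangle\mathtt{l}(a).M \mid \blacktriangledown\{\mathtt{l}_i(x_i).M_i\}_{i\in I} \mid \mu_X.M \mid X \mid \mathsf{if}\ A\ \mathsf{then}\ M\ \mathsf{else}\ N \mid \mathbf{0} \mid \mathsf{no}_P \mid \mathsf{no}_E$ ($\triangleleft,\triangleright$: send to / receive from the monitored process; $\blacktriangle,\blacktriangledown$: send to / receive from the environment). Transitions: $\triangleleft\mathtt{l}(v).M\xrightarrow{\triangleleft\mathtt{l}(v)}M$; $\blacktriangle\mathtt{l}(v).M\xrightarrow{\blacktriangle\mathtt{l}(v)}M$; $\mu_X.M\xrightarrow{\tau}M[\mu_X.M/X]$; $\triangleright\{\mathtt{l}_i(x_i).M_i\}_{i\in I}\xrightarrow{\triangleright\mathtt{l}_j(v)}M_j[v/x_j]$, $\blacktriangledown\{\mathtt{l}_i(x_i).M_i\}_{i\in I}\xrightarrow{\blacktriangledown\mathtt{l}_j(v)}M_j[v/x_j]$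 for $j\in I$; conditionals as for processes; $\triangleright\{\mathtt{l}_i(x_i).M_i\}_{i\in I}\xrightarrow{\triangleright\mathtt{l}(v)}\mathsf{no}_P$ and $\blacktriangledown\{\mathtt{l}_i(x_i).M_i\}_{i\in I}\xrightarrow{\blacktriangledown\mathtt{l}(v)}\mathsf{no}_E$ whenever $\mathtt{l}\neq\mathtt{l}_i$ for all $i\in I$. Composite system $\langle P;M\rangle$: $P\xrightarrow{\triangleleft\mathtt{l}(v)}P'$, $M\xrightarrow{\triangleright\mathtt{l}(v)}M'$ give $\langle P;M\rangle\xrightarrow{\tau}\langle P';M'\rangle$; $P\xrightarrow{\triangleright\mathtt{l}(v)}P'$, $M\xrightarrow{\triangleleft\mathtt{l}(v)}M'$ give $\langle P;M\rangle\xrightarrow{\tau}\langle P';M'\rangle$; $M\xrightarrow{\alpha}M'$ with $\alpha\in\{\blacktriangle\mathtt{l}(v),\blacktriangledown\mathtt{l}(v)\}$ gives $\langle P;M\rangle\xrightarrow{\alpha}\langle P;M'\rangle$; $\tau$-moves of $P$ or $M$ alone lift to $\langle P;M\rangle$. A trace $t$ is a finite sequence of actions $\blacktriangle\mathtt{l}(v),\blacktriangledown\mathtt{l}(v)$; $\xRightarrow{t}$ interleaves $t$ with finitely many $\tau$-transitions. *)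

theory Defs
  imports Main
begin

type_synonym label = string
type_synonym vname = string
type_synonym pvar = string    (* process / type / monitor recursion variables X *)

datatype val = VInt int | VStr string | VBool bool | VPair val val

datatype btype = TInt | TStr | TBool | TPair btype btype

fun val_has_type :: "val \<Rightarrow> btype \<Rightarrow> bool" where
  "val_has_type (VInt _) TInt = True"
| "val_has_type (VStr _) TStr = True"
| "val_has_type (VBool _) TBool = True"
| "val_has_type (VPair v w) (TPair B C) = (val_has_type v B \<and> val_has_type w C)"
| "val_has_type _ _ = False"

datatype aexp = AVal val | AVar vname

datatype pred = PTrue | PFalse | PEq aexp aexp | PLe aexp aexp | PAnd pred pred | PNot pred

fun eval_pred :: "pred \<Rightarrow> bool option" where
  "eval_pred PTrue = Some True"
| "eval_pred PFalse = Some False"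
| "eval_pred (PEq (AVal v) (AVal w)) = Some (v = w)"
| "eval_pred (PEq _ _) = None"
| "eval_pred (PLe (AVal (VInt i)) (AVal (VInt j))) = Some (i \<le> j)"
| "eval_pred (PLe _ _) = None"
| "eval_pred (PAnd A B) =
     (case (eval_pred A, eval_pred B) of (Some a, Some b) \<Rightarrow> Some (a \<and> b) | _ \<Rightarrow> None)"
| "eval_pred (PNot A) = map_option Not (eval_pred A)"

fun aexp_has_type :: "(vname \<Rightarrow> btype option) \<Rightarrow> aexp \<Rightarrow> btype \<Rightarrow> bool" where
  "aexp_has_type \<Gamma> (AVar x) B = (\<Gamma> x = Some B)"
| "aexp_has_type \<Gamma> (AVal v) B = val_has_type v B"

fun pred_bool :: "(vname \<Rightarrow> btype option) \<Rightarrow> pred \<Rightarrow> bool" where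
  "pred_bool \<Gamma> PTrue = True"
| "pred_bool \<Gamma> PFalse = True"
| "pred_bool \<Gamma> (PEq a b) = (\<exists>B. aexp_has_type \<Gamma> a B \<and> aexp_has_type \<Gamma> b B)"
| "pred_bool \<Gamma> (PLe a b) = (aexp_has_type \<Gamma> a TInt \<and> aexp_has_type \<Gamma> b TInt)"
| "pred_bool \<Gamma> (PAnd A B) = (pred_bool \<Gamma> A \<and> pred_bool \<Gamma> B)"
| "pred_bool \<Gamma> (PNot A) = pred_bool \<Gamma> A"

fun subst_a :: "vname \<Rightarrow> val \<Rightarrow> aexp \<Rightarrow> aexp" where
  "subst_a x v (AVar y) = (if x = y then AVal v else AVar y)"
| "subst_a x v (AVal w) = AVal w"

fun subst_pred :: "vname \<Rightarrow> val \<Rightarrow> pred \<Rightarrow> pred" where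
  "subst_pred x v PTrue = PTrue"
| "subst_pred x v PFalse = PFalse"
| "subst_pred x v (PEq a b) = PEq (subst_a x v a) (subst_a x v b)"
| "subst_pred x v (PLe a b) = PLe (subst_a x v a) (subst_a x v b)"
| "subst_pred x v (PAnd A B) = PAnd (subst_pred x v A) (subst_pred x v B)"
| "subst_pred x v (PNot A) = PNot (subst_pred x v A)"

fun fv_a :: "aexp \<Rightarrow> vname set" where
  "fv_a (AVar x) = {x}" | "fv_a (AVal _) = {}"

fun fv_pred :: "pred \<Rightarrow> vname set" where
  "fv_pred PTrue = {}"
| "fv_pred PFalse = {}"
| "fv_pred (PEq a b) = fv_a a \<union> fv_a b"
| "fv_pred (PLe a b) = fv_a a \<union> fv_a b"
| "fv_pred (PAnd A B) = fv_pred A \<union> fv_pred B"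
| "fv_pred (PNot A) = fv_pred A"

datatype proc =
    PSend label aexp proc
  | PBranch "(label \<times> vname \<times> proc) list"
  | PRec pvar proc
  | PVar pvar
  | PIf pred proc proc
  | PNil

fun psubst_v :: "vname \<Rightarrow> val \<Rightarrow> proc \<Rightarrow> proc" where
  "psubst_v x v (PSend l a P) = PSend l (subst_a x v a) (psubst_v x v P)"
| "psubst_v x v (PBranch bs) =
     PBranch (map (\<lambda>(l, y, Q). (l, y, if y = x then Q else psubst_v x v Q)) bs)"
| "psubst_v x v (PRec X P) = PRec X (psubst_v x v P)"
| "psubst_v x v (PVar X) = PVar X"
| "psubst_v x v (PIf A P Q) = PIf (subst_pred x v A) (psubst_v x v P) (psubst_v x v Q)"
| "psubst_v x v PNil = PNil"

fun psubst_X :: "pvar \<Rightarrow> proc \<Rightarrow> proc \<Rightarrow> proc" where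
  "psubst_X X R (PSend l a P) = PSend l a (psubst_X X R P)"
| "psubst_X X R (PBranch bs) = PBranch (map (\<lambda>(l, y, Q). (l, y, psubst_X X R Q)) bs)"
| "psubst_X X R (PRec Y P) = (if X = Y then PRec Y P else PRec Y (psubst_X X R P))"
| "psubst_X X R (PVar Y) = (if X = Y then R else PVar Y)"
| "psubst_X X R (PIf A P Q) = PIf A (psubst_X X R P) (psubst_X X R Q)"
| "psubst_X X R PNil = PNil"

fun fv_proc :: "proc \<Rightarrow> vname set" where
  "fv_proc (PSend l a P) = fv_a a \<union> fv_proc P"
| "fv_proc (PBranch bs) = (\<Union>(l, y, Q) \<in> set bs. fv_proc Q - {y})"
| "fv_proc (PRec X P) = fv_proc P"
| "fv_proc (PVar X) = {}"
| "fv_proc (PIf A P Q) = fv_pred A \<union> fv_proc P \<union> fv_proc Q"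
| "fv_proc PNil = {}"

fun fpv_proc :: "proc \<Rightarrow> pvar set" where
  "fpv_proc (PSend l a P) = fpv_proc P"
| "fpv_proc (PBranch bs) = (\<Union>(l, y, Q) \<in> set bs. fpv_proc Q)"
| "fpv_proc (PRec X P) = fpv_proc P - {X}"
| "fpv_proc (PVar X) = {X}"
| "fpv_proc (PIf A P Q) = fpv_proc P \<union> fpv_proc Q"
| "fpv_proc PNil = {}"

fun unguarded_proc :: "pvar \<Rightarrow> proc \<Rightarrow> bool" where
  "unguarded_proc X (PSend l a P) = False"
| "unguarded_proc X (PBranch bs) = False"
| "unguarded_proc X (PRec Y P) = (X \<noteq> Y \<and> unguarded_proc X P)"
| "unguarded_proc X (PVar Y) = (X = Y)"
| "unguarded_proc X (PIf A P Q) = (unguarded_proc X P \<or> unguarded_proc X Q)"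
| "unguarded_proc X PNil = False"

fun wf_proc :: "proc \<Rightarrow> bool" where
  "wf_proc (PSend l a P) = wf_proc P"
| "wf_proc (PBranch bs) = (distinct (map fst bs) \<and> (\<forall>(l, y, Q) \<in> set bs. wf_proc Q))"
| "wf_proc (PRec X P) = (\<not> unguarded_proc X P \<and> wf_proc P)"
| "wf_proc (PVar X) = True"
| "wf_proc (PIf A P Q) = (wf_proc P \<and> wf_proc Q)"
| "wf_proc PNil = True"

definition is_process :: "proc \<Rightarrow> bool" where
  "is_process P \<longleftrightarrow> wf_proc P \<and> fv_proc P = {} \<and> fpv_proc P = {}"

datatype pact = PTau | POut label val | PIn label val

inductive proc_step :: "proc \<Rightarrow> pact \<Rightarrow> proc \<Rightarrow> bool" where
  p_rec: "proc_step (PRec X P) PTau (psubst_X X (PRec X P) P)"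
| p_out: "proc_step (PSend l (AVal v) P) (POut l v) P"
| p_in: "(l, x, P) \<in> set bs \<Longrightarrow> proc_step (PBranch bs) (PIn l v) (psubst_v x v P)"
| p_if_t: "eval_pred A = Some True \<Longrightarrow> proc_step (PIf A P Q) PTau P"
| p_if_f: "eval_pred A = Some False \<Longrightarrow> proc_step (PIf A P Q) PTau Q"

section \<open>Session types (equi-recursive)\<close>

datatype stype =
    SSel "(label \<times> btype \<times> stype) list"
  | SBra "(label \<times> btype \<times> stype) list"
  | SRec pvar stype
  | STVar pvar
  | SEnd

text \<open>Substitution (only ever used with closed substituted types, hence capture-free).\<close>
fun tsubst :: "pvar \<Rightarrow> stype \<Rightarrow> stype \<Rightarrow> stype" where
  "tsubst X T (SSel bs) = SSel (map (\<lambda>(l, B, S). (l, B, tsubst X T S)) bs)"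
| "tsubst X T (SBra bs) = SBra (map (\<lambda>(l, B, S). (l, B, tsubst X T S)) bs)"
| "tsubst X T (SRec Y S) = (if X = Y then SRec Y S else SRec Y (tsubst X T S))"
| "tsubst X T (STVar Y) = (if X = Y then T else STVar Y)"
| "tsubst X T SEnd = SEnd"

fun ftv :: "stype \<Rightarrow> pvar set" where
  "ftv (SSel bs) = (\<Union>(l, B, S) \<in> set bs. ftv S)"
| "ftv (SBra bs) = (\<Union>(l, B, S) \<in> set bs. ftv S)"
| "ftv (SRec X S) = ftv S - {X}"
| "ftv (STVar X) = {X}"
| "ftv SEnd = {}"

fun unguarded_ty :: "pvar \<Rightarrow> stype \<Rightarrow> bool" where
  "unguarded_ty X (SSel bs) = False"
| "unguarded_ty X (SBra bs) = False"
| "unguarded_ty X (SRec Y S) = (X \<noteq> Y \<and> unguarded_ty X S)"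
| "unguarded_ty X (STVar Y) = (X = Y)"
| "unguarded_ty X SEnd = False"

fun wf_stype :: "stype \<Rightarrow> bool" where
  "wf_stype (SSel bs) = (bs \<noteq> [] \<and> distinct (map fst bs) \<and> (\<forall>(l, B, S) \<in> set bs. wf_stype S))"
| "wf_stype (SBra bs) = (bs \<noteq> [] \<and> distinct (map fst bs) \<and> (\<forall>(l, B, S) \<in> set bs. wf_stype S))"
| "wf_stype (SRec X S) = (\<not> unguarded_ty X S \<and> wf_stype S)"
| "wf_stype (STVar X) = True"
| "wf_stype SEnd = True"

definition closed_stype :: "stype \<Rightarrow> bool" where
  "closed_stype S \<longleftrightarrow> wf_stype S \<and> ftv S = {}"

inductive unfolds :: "stype \<Rightarrow> stype \<Rightarrow> bool" where
  unf_refl: "unfolds S S"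
| unf_step: "unfolds (tsubst X (SRec X S) S) T \<Longrightarrow> unfolds (SRec X S) T"

text \<open>Equality of (closed) session types up to the equi-recursive identification, i.e.
  equality of their infinite unfoldings (coinductively).  Choices are compared as
  label-indexed families, independent of list order.\<close>
coinductive teq :: "stype \<Rightarrow> stype \<Rightarrow> bool" where
  teq_end: "unfolds S SEnd \<Longrightarrow> unfolds T SEnd \<Longrightarrow> teq S T"
| teq_sel: "unfolds S (SSel bs) \<Longrightarrow> unfolds T (SSel cs) \<Longrightarrow>
    (\<forall>(l, B, S') \<in> set bs. \<exists>T'. (l, B, T') \<in> set cs \<and> teq S' T') \<Longrightarrow>
    (\<forall>(l, B, T') \<in> set cs. \<exists>S'. (l, B, S') \<in> set bs \<and> teq S' T') \<Longrightarrow> teq S T"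
| teq_bra: "unfolds S (SBra bs) \<Longrightarrow> unfolds T (SBra cs) \<Longrightarrow>
    (\<forall>(l, B, S') \<in> set bs. \<exists>T'. (l, B, T') \<in> set cs \<and> teq S' T') \<Longrightarrow>
    (\<forall>(l, B, T') \<in> set cs. \<exists>S'. (l, B, S') \<in> set bs \<and> teq S' T') \<Longrightarrow> teq S T"

inductive typed :: "(pvar \<Rightarrow> stype option) \<Rightarrow> (vname \<Rightarrow> btype option) \<Rightarrow> proc \<Rightarrow> stype \<Rightarrow> bool" where
  tBra: "(\<forall>(l, B, S) \<in> set ts. \<exists>x P. (l, x, P) \<in> set bs \<and> typed \<Theta> (\<Gamma>(x \<mapsto> B)) P S)
         \<Longrightarrow> typed \<Theta> \<Gamma> (PBranch bs) (SBra ts)"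
| tSel: "(l, B, S) \<in> set ts \<Longrightarrow> aexp_has_type \<Gamma> a B \<Longrightarrow> typed \<Theta> \<Gamma> P S
         \<Longrightarrow> typed \<Theta> \<Gamma> (PSend l a P) (SSel ts)"
| tRec: "typed (\<Theta>(X \<mapsto> S)) \<Gamma> P S \<Longrightarrow> typed \<Theta> \<Gamma> (PRec X P) S"
| tPVar: "\<Theta> X = Some S \<Longrightarrow> typed \<Theta> \<Gamma> (PVar X) S"
| tIf: "pred_bool \<Gamma> A \<Longrightarrow> typed \<Theta> \<Gamma> P S \<Longrightarrow> typed \<Theta> \<Gamma> Q S \<Longrightarrow> typed \<Theta> \<Gamma> (PIf A P Q) S"
| tNil: "typed \<Theta> \<Gamma> PNil SEnd"
| tEq: "typed \<Theta> \<Gamma> P S \<Longrightarrow> teq S S' \<Longrightarrow> typed \<Theta> \<Gamma> P S'"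
  \<comment> \<open>equi-recursive types: a judgement holds for all types identified with S\<close>

datatype mon =
    MSendP label aexp mon
  | MRecvP "(label \<times> vname \<times> mon) list"
  | MSendE label aexp mon
  | MRecvE "(label \<times> vname \<times> mon) list"
  | MRec pvar mon
  | MVar pvar
  | MIf pred mon mon
  | MNil
  | NoP
  | NoE

fun msubst_v :: "vname \<Rightarrow> val \<Rightarrow> mon \<Rightarrow> mon" where
  "msubst_v x v (MSendP l a M) = MSendP l (subst_a x v a) (msubst_v x v M)"
| "msubst_v x v (MRecvP bs) =
     MRecvP (map (\<lambda>(l, y, N). (l, y, if y = x then N else msubst_v x v N)) bs)"
| "msubst_v x v (MSendE l a M) = MSendE l (subst_a x v a) (msubst_v x v M)"
| "msubst_v x v (MRecvE bs) =
     MRecvE (map (\<lambda>(l, y, N). (l, y, if y = x then N else msubst_v x v N)) bs)"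
| "msubst_v x v (MRec X M) = MRec X (msubst_v x v M)"
| "msubst_v x v (MVar X) = MVar X"
| "msubst_v x v (MIf A M N) = MIf (subst_pred x v A) (msubst_v x v M) (msubst_v x v N)"
| "msubst_v x v MNil = MNil"
| "msubst_v x v NoP = NoP"
| "msubst_v x v NoE = NoE"

fun msubst_X :: "pvar \<Rightarrow> mon \<Rightarrow> mon \<Rightarrow> mon" where
  "msubst_X X R (MSendP l a M) = MSendP l a (msubst_X X R M)"
| "msubst_X X R (MRecvP bs) = MRecvP (map (\<lambda>(l, y, N). (l, y, msubst_X X R N)) bs)"
| "msubst_X X R (MSendE l a M) = MSendE l a (msubst_X X R M)"
| "msubst_X X R (MRecvE bs) = MRecvE (map (\<lambda>(l, y, N). (l, y, msubst_X X R N)) bs)"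
| "msubst_X X R (MRec Y M) = (if X = Y then MRec Y M else MRec Y (msubst_X X R M))"
| "msubst_X X R (MVar Y) = (if X = Y then R else MVar Y)"
| "msubst_X X R (MIf A M N) = MIf A (msubst_X X R M) (msubst_X X R N)"
| "msubst_X X R MNil = MNil"
| "msubst_X X R NoP = NoP"
| "msubst_X X R NoE = NoE"

datatype mact = MTau | MOutP label val | MInP label val | MOutE label val | MInE label val

inductive mon_step :: "mon \<Rightarrow> mact \<Rightarrow> mon \<Rightarrow> bool" where
  m_outp: "mon_step (MSendP l (AVal v) M) (MOutP l v) M"
| m_oute: "mon_step (MSendE l (AVal v) M) (MOutE l v) M"
| m_rec: "mon_step (MRec X M) MTau (msubst_X X (MRec X M) M)"
| m_inp: "(l, x, M) \<in> set bs \<Longrightarrow> mon_step (MRecvP bs) (MInP l v) (msubst_v x v M)"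
| m_ine: "(l, x, M) \<in> set bs \<Longrightarrow> mon_step (MRecvE bs) (MInE l v) (msubst_v x v M)"
| m_if_t: "eval_pred A = Some True \<Longrightarrow> mon_step (MIf A M N) MTau M"
| m_if_f: "eval_pred A = Some False \<Longrightarrow> mon_step (MIf A M N) MTau N"
| m_nop: "l \<notin> fst ` set bs \<Longrightarrow> mon_step (MRecvP bs) (MInP l v) NoP"
| m_noe: "l \<notin> fst ` set bs \<Longrightarrow> mon_step (MRecvE bs) (MInE l v) NoE"

datatype eact = EOut label val
              | EIn label val

inductive sys_step :: "proc \<Rightarrow> mon \<Rightarrow> eact option \<Rightarrow> proc \<Rightarrow> mon \<Rightarrow> bool" where
  s_p2m: "proc_step P (POut l v) P' \<Longrightarrow> mon_step M (MInP l v) M' \<Longrightarrow> sys_step P M None P' M'"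
| s_m2p: "proc_step P (PIn l v) P' \<Longrightarrow> mon_step M (MOutP l v) M' \<Longrightarrow> sys_step P M None P' M'"
| s_oute: "mon_step M (MOutE l v) M' \<Longrightarrow> sys_step P M (Some (EOut l v)) P M'"
| s_ine: "mon_step M (MInE l v) M' \<Longrightarrow> sys_step P M (Some (EIn l v)) P M'"
| s_ptau: "proc_step P PTau P' \<Longrightarrow> sys_step P M None P' M"
| s_mtau: "mon_step M MTau M' \<Longrightarrow> sys_step P M None P M'"

inductive weak_trace :: "proc \<Rightarrow> mon \<Rightarrow> eact list \<Rightarrow> proc \<Rightarrow> mon \<Rightarrow> bool" where
  wt_refl: "weak_trace P M [] P M"
| wt_tau: "sys_step P M None P1 M1 \<Longrightarrow> weak_trace P1 M1 t P' M' \<Longrightarrow> weak_trace P M t P' M'"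
| wt_vis: "sys_step P M (Some a) P1 M1 \<Longrightarrow> weak_trace P1 M1 t P' M' \<Longrightarrow> weak_trace P M (a # t) P' M'"

definition monitor_sound :: "mon \<Rightarrow> stype \<Rightarrow> bool" where
  "monitor_sound M S \<longleftrightarrow>
     (\<forall>P. is_process P \<longrightarrow> (\<exists>t P'. weak_trace P M t P' NoP) \<longrightarrow> \<not> typed Map.empty Map.empty P S)"

definition monitor_complete :: "mon \<Rightarrow> stype \<Rightarrow> bool" where
  "monitor_complete M S \<longleftrightarrow>
     (\<forall>P. is_process P \<longrightarrow> \<not> typed Map.empty Map.empty P S \<longrightarrow> (\<exists>t P'. weak_trace P M t P' NoP))"

end

theory Submission
  imports Defs
begin

text \<open>The inactive process \<open>0\<close> has type \<open>end\<close> only, so for \<open>S \<noteq> end\<close> a complete monitor must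
  reach \<open>no\<^sub>P\<close> when composed with \<open>0\<close>. As \<open>0\<close> never moves, this run consists of moves of the
  monitor alone and can be replayed next to any process, in particular next to a well-typed
  process of type \<open>S\<close>; such a process exists because every closed session type is inhabited
  (send default values, offer every branch, recurse where the type recurses). This contradicts
  soundness.\<close>

fun default_val :: "btype \<Rightarrow> val" where
  "default_val TInt = VInt 0"
| "default_val TStr = VStr []"
| "default_val TBool = VBool True"
| "default_val (TPair B C) = VPair (default_val B) (default_val C)"

lemma val_has_type_default_val: "val_has_type (default_val B) B"
  by (induction B) auto

fun canonical_proc :: "stype \<Rightarrow> proc" where
  "canonical_proc (SSel []) = PNil"
| "canonical_proc (SSel ((l, B, S) # bs)) = PSend l (AVal (default_val B)) (canonical_proc S)"
| "canonical_proc (SBra bs) = PBranch (map (\<lambda>(l, B, S). (l, ''x'', canonical_proc S)) bs)"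
| "canonical_proc (SRec X S) = PRec X (canonical_proc S)"
| "canonical_proc (STVar X) = PVar X"
| "canonical_proc SEnd = PNil"

fun stype_subst :: "(pvar \<Rightarrow> stype) \<Rightarrow> stype \<Rightarrow> stype" where
  "stype_subst \<rho> (SSel bs) = SSel (map (\<lambda>(l, B, S). (l, B, stype_subst \<rho> S)) bs)"
| "stype_subst \<rho> (SBra bs) = SBra (map (\<lambda>(l, B, S). (l, B, stype_subst \<rho> S)) bs)"
| "stype_subst \<rho> (SRec X S) = SRec X (stype_subst (\<rho>(X := STVar X)) S)"
| "stype_subst \<rho> (STVar X) = \<rho> X"
| "stype_subst \<rho> SEnd = SEnd"

lemma stype_subst_cong:
  "(\<forall>Y\<in>ftv S. \<rho>1 Y = \<rho>2 Y) \<Longrightarrow> stype_subst \<rho>1 S = stype_subst \<rho>2 S"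
proof (induction \<rho>1 S arbitrary: \<rho>2 rule: stype_subst.induct)
  case (3 \<rho> X S)
  then show ?case by (simp add: fun_upd_def)
qed (fastforce intro!: map_cong)+

lemma stype_subst_STVar: "stype_subst STVar S = S"
proof (induction S)
  case (SRec X S)
  have "STVar(X := STVar X) = STVar" by auto
  with SRec show ?case by simp
qed (auto intro!: map_idI)

lemma tsubst_no_ftv: "X \<notin> ftv T \<Longrightarrow> tsubst X R T = T"
  by (induction X R T rule: tsubst.induct) (auto intro!: map_idI)

lemma ftv_stype_subst: "ftv (stype_subst \<rho> S) \<subseteq> (\<Union>Y\<in>ftv S. ftv (\<rho> Y))"
proof (induction \<rho> S rule: stype_subst.induct)
  case (3 \<rho> X S)
  show ?case
  proof
    fix Z assume "Z \<in> ftv (stype_subst \<rho> (SRec X S))"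
    then have "Z \<noteq> X" "Z \<in> ftv (stype_subst (\<rho>(X := STVar X)) S)" by auto
    with 3 obtain Y where "Y \<in> ftv S" "Z \<in> ftv ((\<rho>(X := STVar X)) Y)" by blast
    with \<open>Z \<noteq> X\<close> show "Z \<in> (\<Union>Y\<in>ftv (SRec X S). ftv (\<rho> Y))"
      by (cases "Y = X") auto
  qed
qed fastforce+

lemma unguarded_ty_ftv: "unguarded_ty X S \<Longrightarrow> X \<in> ftv S"
  by (induction S) auto

lemma unguarded_ty_stype_subst:
  "unguarded_ty Z (stype_subst \<rho> S) \<Longrightarrow> \<exists>Y. unguarded_ty Y S \<and> unguarded_ty Z (\<rho> Y)"
proof (induction \<rho> S rule: stype_subst.induct)
  case (3 \<rho> X S)
  then obtain Y where "unguarded_ty Y S" "unguarded_ty Z ((\<rho>(X := STVar X)) Y)" "Z \<noteq> X"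
    by (auto simp add: fun_upd_def)
  then show ?case by (cases "Y = X") auto
qed auto

text \<open>The hypothesis \<open>ftv (\<rho> Y) \<subseteq> {Y}\<close> keeps a binder \<open>rec X\<close> guarded: substituting under it
  cannot make \<open>X\<close> appear unguarded.\<close>

lemma wf_stype_subst:
  assumes "wf_stype S" "\<And>Y. wf_stype (\<rho> Y)" "\<And>Y. ftv (\<rho> Y) \<subseteq> {Y}"
  shows "wf_stype (stype_subst \<rho> S)"
  using assms
proof (induction \<rho> S rule: stype_subst.induct)
  case (3 \<rho> X S)
  let ?\<rho>' = "\<rho>(X := STVar X)"
  have guarded: "\<not> unguarded_ty X (stype_subst ?\<rho>' S)"
  proof
    assume "unguarded_ty X (stype_subst ?\<rho>' S)"
    then obtain Y where Y: "unguarded_ty Y S" "unguarded_ty X (?\<rho>' Y)"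
      using unguarded_ty_stype_subst by blast
    show False
    proof (cases "Y = X")
      case True
      with Y "3.prems"(1) show ?thesis by simp
    next
      case False
      with Y have "X \<in> ftv (\<rho> Y)" using unguarded_ty_ftv by fastforce
      with False "3.prems"(3) show ?thesis by blast
    qed
  qed
  have "wf_stype (stype_subst ?\<rho>' S)"
    using "3.prems" by (intro "3.IH") auto
  with guarded show ?case by (simp add: fun_upd_def)
qed (auto simp: comp_def case_prod_beta)

lemma closed_stype_subst:
  assumes "wf_stype S" "\<And>Y. closed_stype (\<rho> Y)"
  shows "closed_stype (stype_subst \<rho> S)"
proof -
  have "wf_stype (stype_subst \<rho> S)"
    using assms by (intro wf_stype_subst) (auto simp: closed_stype_def)
  moreover have "ftv (stype_subst \<rho> S) = {}"
    using ftv_stype_subst[of \<rho> S] assms(2) by (auto simp: closed_stype_def)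
  ultimately show ?thesis by (simp add: closed_stype_def)
qed

lemma tsubst_stype_subst:
  "(\<And>Y. Y \<noteq> X \<Longrightarrow> X \<notin> ftv (\<rho> Y)) \<Longrightarrow>
   tsubst X R (stype_subst \<rho> S) = stype_subst (\<lambda>Y. tsubst X R (\<rho> Y)) S"
proof (induction \<rho> S rule: stype_subst.induct)
  case (3 \<rho> Z S)
  show ?case
  proof (cases "X = Z")
    case True
    have "stype_subst (\<rho>(Z := STVar Z)) S = stype_subst ((\<lambda>Y. tsubst X R (\<rho> Y))(Z := STVar Z)) S"
      using "3.prems" True by (intro stype_subst_cong) (auto intro: tsubst_no_ftv[symmetric])
    with True show ?thesis by simp
  next
    case False
    have "(\<lambda>Y. tsubst X R ((\<rho>(Z := STVar Z)) Y)) = (\<lambda>Y. tsubst X R (\<rho> Y))(Z := STVar Z)"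
      using False by auto
    with "3.IH" "3.prems" False show ?thesis by (simp add: fun_upd_def)
  qed
qed (fastforce intro!: map_cong)+

lemma tsubst_eq_stype_subst: "tsubst X R S = stype_subst (STVar(X := R)) S"
proof -
  have "tsubst X R S = tsubst X R (stype_subst STVar S)" by (simp add: stype_subst_STVar)
  also have "\<dots> = stype_subst (\<lambda>Y. tsubst X R (STVar Y)) S"
    by (rule tsubst_stype_subst) auto
  also have "(\<lambda>Y. tsubst X R (STVar Y)) = STVar(X := R)" by auto
  finally show ?thesis .
qed

lemma closed_stype_unfold:
  assumes "closed_stype (SRec X S)"
  shows "closed_stype (tsubst X (SRec X S) S)"
proof -
  have "tsubst X (SRec X S) S = stype_subst (\<lambda>_. SRec X S) S"
    unfolding tsubst_eq_stype_subst
    using assms by (intro stype_subst_cong) (auto simp: closed_stype_def)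
  moreover have "closed_stype (stype_subst (\<lambda>_. SRec X S) S)"
    using assms by (intro closed_stype_subst) (simp_all add: closed_stype_def)
  ultimately show ?thesis by simp
qed

fun rec_depth :: "stype \<Rightarrow> nat" where
  "rec_depth (SRec X S) = Suc (rec_depth S)"
| "rec_depth _ = 0"

lemma rec_depth_tsubst: "\<not> unguarded_ty X S \<Longrightarrow> rec_depth (tsubst X R S) = rec_depth S"
  by (induction S) auto

lemma closed_stype_unfolds_non_rec:
  "closed_stype U \<Longrightarrow> \<exists>N. unfolds U N \<and> closed_stype N \<and> (\<forall>X S. N \<noteq> SRec X S)"
proof (induction "rec_depth U" arbitrary: U rule: less_induct)
  case less
  show ?case
  proof (cases U)
    case (SRec X S)
    let ?U = "tsubst X (SRec X S) S"
    have closed: "closed_stype ?U" using less.prems SRec closed_stype_unfold by simp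
    have "rec_depth ?U = rec_depth S"
      using less.prems SRec rec_depth_tsubst by (simp add: closed_stype_def)
    then have "rec_depth ?U < rec_depth U" using SRec by simp
    then obtain N where "unfolds ?U N \<and> closed_stype N \<and> (\<forall>X S. N \<noteq> SRec X S)"
      using less.hyps closed by blast
    with SRec show ?thesis using unf_step by blast
  qed (use less.prems unf_refl in auto)
qed

lemma teq_refl: "closed_stype U \<Longrightarrow> teq U U"
proof (coinduction arbitrary: U rule: teq.coinduct)
  case (teq U)
  then obtain N where N: "unfolds U N" "closed_stype N" "\<forall>X S. N \<noteq> SRec X S"
    using closed_stype_unfolds_non_rec by blast
  show ?case
  proof (cases N)
    case (SSel bs)
    have "\<forall>(l, B, S')\<in>set bs. closed_stype S'"
      using N(2) SSel by (fastforce simp: closed_stype_def)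
    with N SSel show ?thesis by fastforce
  next
    case (SBra bs)
    have "\<forall>(l, B, S')\<in>set bs. closed_stype S'"
      using N(2) SBra by (fastforce simp: closed_stype_def)
    with N SBra show ?thesis by fastforce
  next
    case (STVar X)
    with N show ?thesis by (simp add: closed_stype_def)
  qed (use N in auto)
qed

lemma teq_unfold:
  assumes "closed_stype (SRec X S)"
  shows "teq (tsubst X (SRec X S) S) (SRec X S)"
  using teq_refl[OF closed_stype_unfold[OF assms]]
  by (cases rule: teq.cases) (auto intro: teq.intros unf_step)

subsection \<open>Every closed session type is inhabited\<close>

lemma typed_canonical_proc:
  assumes "wf_stype S" "\<And>Y. closed_stype (\<rho> Y)" "\<And>X. X \<in> ftv S \<Longrightarrow> \<Theta> X = Some (\<rho> X)"
  shows "typed \<Theta> \<Gamma> (canonical_proc S) (stype_subst \<rho> S)"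
  using assms
proof (induction S arbitrary: \<rho> \<Theta> \<Gamma> rule: canonical_proc.induct)
  case (2 l B S bs)
  then have "typed \<Theta> \<Gamma> (canonical_proc S) (stype_subst \<rho> S)" by auto
  then show ?case
    by (auto intro!: typed.tSel simp: val_has_type_default_val)
next
  case (3 bs)
  show ?case
  proof (simp, rule typed.tBra, clarsimp)
    fix l B S assume m: "(l, B, S) \<in> set bs"
    have "typed \<Theta> (\<Gamma>(''x'' \<mapsto> B)) (canonical_proc S) (stype_subst \<rho> S)"
      using "3.prems" m by (fastforce intro!: "3.IH"[OF m refl refl])
    with m show "\<exists>x P. (l, x, P) \<in> (\<lambda>(l, B, S). (l, ''x'', canonical_proc S)) ` set bs
                   \<and> typed \<Theta> (\<Gamma>(x \<mapsto> B)) P (stype_subst \<rho> S)"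
      by force
  qed
next
  case (4 X S)
  let ?\<rho>' = "\<rho>(X := STVar X)"
  define R where "R = stype_subst \<rho> (SRec X S)"
  let ?\<rho>'' = "\<rho>(X := R)"
  have closed_R: "closed_stype R"
    unfolding R_def using "4.prems" by (intro closed_stype_subst) auto
  have "typed (\<Theta>(X \<mapsto> R)) \<Gamma> (canonical_proc S) (stype_subst ?\<rho>'' S)"
    using "4.prems" closed_R by (intro "4.IH") auto
  moreover have "stype_subst ?\<rho>'' S = tsubst X R (stype_subst ?\<rho>' S)"
  proof -
    have "tsubst X R (stype_subst ?\<rho>' S) = stype_subst (\<lambda>Y. tsubst X R (?\<rho>' Y)) S"
      using "4.prems"(2) by (intro tsubst_stype_subst) (auto simp: closed_stype_def)
    also have "\<dots> = stype_subst ?\<rho>'' S"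
      using "4.prems"(2)
      by (intro stype_subst_cong) (auto simp: closed_stype_def intro: tsubst_no_ftv)
    finally show ?thesis by simp
  qed
  moreover have "teq (tsubst X R (stype_subst ?\<rho>' S)) R"
    using closed_R teq_unfold by (simp add: R_def)
  \<comment> \<open>\<open>R\<close> unfolds to \<open>stype_subst ?\<rho>'' S\<close>, so \<open>tEq\<close> yields the typing at \<open>R\<close> that \<open>tRec\<close> requires\<close>
  ultimately have "typed (\<Theta>(X \<mapsto> R)) \<Gamma> (canonical_proc S) R"
    using typed.tEq by metis
  then show ?case unfolding R_def by (auto intro: typed.tRec)
qed (auto intro: typed.tPVar typed.tNil)

lemma typed_canonical_proc_closed:
  assumes "closed_stype S"
  shows "typed Map.empty Map.empty (canonical_proc S) S"
proof -
  have "stype_subst (\<lambda>_. SEnd) S = S"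
    using assms stype_subst_cong[of S "\<lambda>_. SEnd" STVar]
    by (simp add: stype_subst_STVar closed_stype_def)
  moreover have "typed Map.empty Map.empty (canonical_proc S) (stype_subst (\<lambda>_. SEnd) S)"
    using assms by (intro typed_canonical_proc) (auto simp: closed_stype_def)
  ultimately show ?thesis by simp
qed

lemma unguarded_proc_canonical_proc: "unguarded_proc X (canonical_proc S) \<Longrightarrow> unguarded_ty X S"
  by (induction S rule: canonical_proc.induct) auto

lemma wf_proc_canonical_proc: "wf_stype S \<Longrightarrow> wf_proc (canonical_proc S)"
proof (induction S rule: canonical_proc.induct)
  case (3 bs)
  have "map fst (map (\<lambda>(l, B, S). (l, ''x'', canonical_proc S)) bs) = map fst bs" by auto
  with 3 show ?case by (auto simp del: map_map)
next
  case (4 X S)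
  then show ?case using unguarded_proc_canonical_proc by auto
qed auto

lemma fv_proc_canonical_proc: "fv_proc (canonical_proc S) = {}"
  by (induction S rule: canonical_proc.induct) auto

lemma fpv_proc_canonical_proc: "fpv_proc (canonical_proc S) \<subseteq> ftv S"
  by (induction S rule: canonical_proc.induct) fastforce+

lemma is_process_canonical_proc: "closed_stype S \<Longrightarrow> is_process (canonical_proc S)"
  using wf_proc_canonical_proc fv_proc_canonical_proc fpv_proc_canonical_proc
  unfolding is_process_def closed_stype_def by blast

lemma unfolds_non_rec_unique:
  "unfolds S T1 \<Longrightarrow> unfolds S T2 \<Longrightarrow> (\<forall>X S. T1 \<noteq> SRec X S) \<Longrightarrow> (\<forall>X S. T2 \<noteq> SRec X S)
   \<Longrightarrow> T1 = T2"
proof (induction arbitrary: T2 rule: unfolds.induct)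
  case (unf_refl S)
  from unf_refl.prems(1) show ?case
    by (cases rule: unfolds.cases) (use unf_refl.prems(2) in auto)
next
  case (unf_step X S T)
  from unf_step.prems(1) show ?case
    by (cases rule: unfolds.cases) (use unf_step.IH unf_step.prems in auto)
qed

lemma typed_PNil_unfolds_SEnd: "typed \<Theta> \<Gamma> PNil S \<Longrightarrow> unfolds S SEnd"
proof (induction \<Theta> \<Gamma> "PNil" S rule: typed.induct)
  case (tNil \<Theta> \<Gamma>)
  show ?case by (rule unf_refl)
next
  case (tEq \<Theta> \<Gamma> S S')
  from tEq.hyps(3) show ?case
    by (cases rule: teq.cases) (use unfolds_non_rec_unique[OF tEq.hyps(2)] in fastforce)+
qed

lemma PNil_untyped: "\<not> teq S SEnd \<Longrightarrow> \<not> typed \<Theta> \<Gamma> PNil S"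
  using typed_PNil_unfolds_SEnd teq.teq_end unf_refl by blast

lemma weak_trace_PNil_replay: "weak_trace PNil M t P' M' \<Longrightarrow> weak_trace Q M t Q M'"
proof (induction PNil M t P' M' rule: weak_trace.induct)
  case (wt_refl M)
  show ?case by (rule weak_trace.wt_refl)
next
  case (wt_tau M P1 M1 t P' M')
  from wt_tau.hyps(1) show ?case
    by (cases rule: sys_step.cases)
      (use wt_tau in \<open>auto elim: proc_step.cases intro: weak_trace.wt_tau sys_step.s_mtau\<close>)
next
  case (wt_vis M a P1 M1 t P' M')
  from wt_vis.hyps(1) show ?case
    by (cases rule: sys_step.cases) (use wt_vis in \<open>auto intro: weak_trace.wt_vis sys_step.intros\<close>)
qed

theorem mainTheorem4:
  assumes "closed_stype S"
    and "\<not> teq S SEnd"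
  shows "\<not> (\<exists>M. monitor_sound M S \<and> monitor_complete M S)"
proof
  assume "\<exists>M. monitor_sound M S \<and> monitor_complete M S"
  then obtain M where sound: "monitor_sound M S" and complete: "monitor_complete M S" by blast
  have "is_process PNil" by (simp add: is_process_def)
  then obtain t P' where "weak_trace PNil M t P' NoP"
    using complete PNil_untyped[OF assms(2)] unfolding monitor_complete_def by blast
  then have "weak_trace (canonical_proc S) M t (canonical_proc S) NoP"
    by (rule weak_trace_PNil_replay)
  with sound is_process_canonical_proc[OF assms(1)] typed_canonical_proc_closed[OF assms(1)]
  show False unfolding monitor_sound_def by blast
qed

end
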